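(* Let $x_0\in X$ be a regular point and let $u\ge0$ be a $p$-harmonic function on $\mathcal T(x_0)$. Then there exists a measure $\nu$ on $\Omega_{x_0}$ such that $$u(x)=\frac{1}{W(x)W(r(x))\cdots W(r^{n(x)-1}(x))}\,\nu\big(V_{r^{n(x)}(x),r^{n(x)-1}(x),\dots,x}\big),\qquad x\in\mathcal T(x_0).$$
   Context: $X$ is a compact metric space, $r:X\to X$ a finite-to-one, onto, Borel map, $m_0$ a Borel function with $\frac{1}{\#r^{-1}(x)}\sum_{r(y)=x}|m_0(y)|^2=1$, and $W(x)=|m_0(x)|^2/\#r^{-1}(r(x))$. A point $x_0$ is regular if the sets $r^{-n}(x_0)$, $n\in\mathbb N$, are mutually disjoint and no $r^{-n}(x_0)$, $n\ge0$, meets the zero set of $W$. $\mathcal T(x_0)=\bigcup_{n\ge0}r^{-n}(x_0)$; for $x\in\mathcal T(x_0)$, $n(x)$ is the unique $n\ge0$ with $r^n(x)=x_0$. A function $u$ on $\mathcal T(x_0)$ is $p$-harmonic if $u(x)=\sum_{r(y)=x}W(y)u(y)$ for all $x\in\mathcal T(x_0)$. $\Omega_{x_0}=\{(x_0,x_1,\dots):r(x_{n+1})=x_n\ \forall n\ge0\}$, with the product topology generated by the cylinders $V_{x_0,\dots,x_n}=\{(z_k)\in\Omega_{x_0}:z_0=x_0,\dots,z_n=x_n\}$; measures on $\Omega_{x_0}$ are Borel measures for this topology. *)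

theory Defs
  imports "HOL-Analysis.Analysis"
begin

definition preim :: "'a set \<Rightarrow> ('a \<Rightarrow> 'a) \<Rightarrow> 'a \<Rightarrow> 'a set" where
  "preim X r x = {y \<in> X. r y = x}"

definition preim_n :: "'a set \<Rightarrow> ('a \<Rightarrow> 'a) \<Rightarrow> nat \<Rightarrow> 'a \<Rightarrow> 'a set" where
  "preim_n X r n x = {y \<in> X. (r ^^ n) y = x}"

definition standing :: "'a::metric_space set \<Rightarrow> ('a \<Rightarrow> 'a) \<Rightarrow> ('a \<Rightarrow> complex) \<Rightarrow> bool" where
  "standing X r m0 \<longleftrightarrow>
     compact X \<and> r ` X = X \<and> (\<forall>x\<in>X. finite (preim X r x)) \<and>
     r \<in> borel_measurable (restrict_space borel X) \<and>
     m0 \<in> borel_measurable (restrict_space borel X) \<and>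
     (\<forall>x\<in>X. (1 / real (card (preim X r x))) * (\<Sum>y\<in>preim X r x. (cmod (m0 y))\<^sup>2) = 1)"

definition Wfun :: "'a set \<Rightarrow> ('a \<Rightarrow> 'a) \<Rightarrow> ('a \<Rightarrow> complex) \<Rightarrow> 'a \<Rightarrow> real" where
  "Wfun X r m0 x = (cmod (m0 x))\<^sup>2 / real (card (preim X r (r x)))"

definition regular_point :: "'a set \<Rightarrow> ('a \<Rightarrow> 'a) \<Rightarrow> ('a \<Rightarrow> complex) \<Rightarrow> 'a \<Rightarrow> bool" where
  "regular_point X r m0 x0 \<longleftrightarrow> x0 \<in> X \<and>
     (\<forall>n m. 1 \<le> n \<longrightarrow> 1 \<le> m \<longrightarrow> n \<noteq> m \<longrightarrow> preim_n X r n x0 \<inter> preim_n X r m x0 = {}) \<and>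
     (\<forall>n. preim_n X r n x0 \<inter> {x \<in> X. Wfun X r m0 x = 0} = {})"

definition tree :: "'a set \<Rightarrow> ('a \<Rightarrow> 'a) \<Rightarrow> 'a \<Rightarrow> 'a set" where
  "tree X r x0 = (\<Union>n. preim_n X r n x0)"

definition level :: "('a \<Rightarrow> 'a) \<Rightarrow> 'a \<Rightarrow> 'a \<Rightarrow> nat" where
  "level r x0 x = (THE n. (r ^^ n) x = x0)"

definition p_harmonic :: "'a set \<Rightarrow> ('a \<Rightarrow> 'a) \<Rightarrow> ('a \<Rightarrow> complex) \<Rightarrow> 'a \<Rightarrow> ('a \<Rightarrow> real) \<Rightarrow> bool" where
  "p_harmonic X r m0 x0 u \<longleftrightarrow>
     (\<forall>x\<in>tree X r x0. u x = (\<Sum>y\<in>preim X r x. Wfun X r m0 y * u y))"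

definition Omega :: "'a set \<Rightarrow> ('a \<Rightarrow> 'a) \<Rightarrow> 'a \<Rightarrow> (nat \<Rightarrow> 'a) set" where
  "Omega X r x0 = {z. z 0 = x0 \<and> (\<forall>n. z n \<in> X \<and> r (z (Suc n)) = z n)}"

definition cyl :: "'a set \<Rightarrow> ('a \<Rightarrow> 'a) \<Rightarrow> 'a \<Rightarrow> 'a list \<Rightarrow> (nat \<Rightarrow> 'a) set" where
  "cyl X r x0 xs = {z \<in> Omega X r x0. \<forall>k<length xs. z k = xs ! k}"

end

theory Submission
  imports Defs "HOL-Probability.Probability"
begin

text \<open>
  Put \<open>c x = u x \<cdot> W x \<cdot> W (r x) \<cdots> W (r\<^bsup>n(x)-1\<^esup> x)\<close>. Harmonicity of \<open>u\<close> says exactly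
  that \<open>c x\<close> is the sum of \<open>c\<close> over the children \<open>r\<^sup>-\<^sup>1(x)\<close> of \<open>x\<close>, so \<open>c\<close> is a
  nonnegative flow on the tree \<open>\<T>(x\<^sub>0)\<close> (regularity makes it a tree, graded by \<open>n(x)\<close>).
  The ratios \<open>c y / c x\<close> are then transition probabilities from \<open>x\<close> to its children.
  Choosing a child independently at every node and following these choices from \<open>x\<^sub>0\<close>
  gives a random path in \<open>\<Omega>\<^sub>x\<^sub>0\<close>; as a path visits every node at most once, the
  probability of starting along \<open>x\<^sub>0, \<dots>, x\<close> is a telescoping product equal to
  \<open>c x / c x\<^sub>0\<close>. The measure \<open>\<nu>\<close> is \<open>c x\<^sub>0\<close> times the law of this path.
\<close>

definition walk :: "'a \<Rightarrow> ('a \<Rightarrow> 'a) \<Rightarrow> nat \<Rightarrow> 'a" where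
  "walk x0 \<omega> n = (\<omega> ^^ n) x0"

lemma walk_0 [simp]: "walk x0 \<omega> 0 = x0"
  by (simp add: walk_def)

lemma walk_Suc [simp]: "walk x0 \<omega> (Suc n) = \<omega> (walk x0 \<omega> n)"
  by (simp add: walk_def)

lemma open_fun_nat_prefix_neighbourhood:
  fixes S :: "(nat \<Rightarrow> 'a::topological_space) set"
  assumes "open S" and "f \<in> S"
  obtains N where "\<And>g. (\<And>k. k \<le> N \<Longrightarrow> g k = f k) \<Longrightarrow> g \<in> S"
proof -
  have "openin (product_topology (\<lambda>_. euclidean) UNIV) S"
    using \<open>open S\<close> by (simp add: open_fun_def)
  from product_topology_open_contains_basis[OF this \<open>f \<in> S\<close>]
  obtain U where U: "f \<in> (\<Pi>\<^sub>E k\<in>UNIV. U k)" "finite {k. U k \<noteq> UNIV}" "(\<Pi>\<^sub>E k\<in>UNIV. U k) \<subseteq> S"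
    by auto
  define N where "N = Max (insert 0 {k. U k \<noteq> UNIV})"
  have "g \<in> S" if "\<And>k. k \<le> N \<Longrightarrow> g k = f k" for g
  proof -
    have "g k \<in> U k" for k
    proof (cases "U k = UNIV")
      case False
      then have "k \<le> N" using U(2) by (simp add: N_def)
      then show ?thesis using that U(1) by (auto simp: PiE_UNIV_domain)
    qed simp
    then show ?thesis using U(3) by (auto simp: PiE_UNIV_domain)
  qed
  then show thesis by (rule that)
qed

locale successor_choice =
  fixes T :: "'a::topological_space set" and succ :: "'a \<Rightarrow> 'a set"
    and p :: "'a \<Rightarrow> 'a \<Rightarrow> real" and root :: 'a
  assumes countable_nodes: "countable T"
    and root_in_nodes: "root \<in> T"
    and succ_subset: "x \<in> T \<Longrightarrow> succ x \<subseteq> T"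
    and finite_succ: "x \<in> T \<Longrightarrow> finite (succ x)"
    and p_nonneg: "x \<in> T \<Longrightarrow> y \<in> succ x \<Longrightarrow> 0 \<le> p x y"
    and sum_p: "x \<in> T \<Longrightarrow> (\<Sum>y\<in>succ x. p x y) = 1"
begin

definition step :: "'a \<Rightarrow> 'a measure" where
  "step x = point_measure (succ x) (\<lambda>y. ennreal (p x y))"

definition choices :: "('a \<Rightarrow> 'a) measure" where
  "choices = (\<Pi>\<^sub>M x\<in>T. step x)"

definition walk_cylinder :: "'a list \<Rightarrow> ('a \<Rightarrow> 'a) set" where
  "walk_cylinder xs = {\<omega> \<in> space choices. \<forall>k<length xs. walk root \<omega> k = xs ! k}"

lemma prob_space_step: "x \<in> T \<Longrightarrow> prob_space (step x)"
  unfolding step_def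
  by (rule prob_space_point_measure) (auto simp: sum_ennreal p_nonneg sum_p finite_succ)

lemma sets_step: "sets (step x) = Pow (succ x)"
  by (simp add: step_def sets_point_measure)

lemma space_choices: "space choices = (\<Pi>\<^sub>E x\<in>T. succ x)"
  by (simp add: choices_def space_PiM step_def space_point_measure)

lemma walk_succ:
  assumes "\<omega> \<in> space choices"
  shows "walk root \<omega> n \<in> T" and "walk root \<omega> (Suc n) \<in> succ (walk root \<omega> n)"
proof -
  show T: "walk root \<omega> n \<in> T"
  proof (induction n)
    case (Suc n)
    then show ?case using assms succ_subset by (auto simp: space_choices)
  qed (simp add: root_in_nodes)
  show "walk root \<omega> (Suc n) \<in> succ (walk root \<omega> n)"
    using assms T by (auto simp: space_choices)
qed

lemma sets_walk_eq: "{\<omega> \<in> space choices. walk root \<omega> n = a} \<in> sets choices"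
proof (induction n arbitrary: a)
  case 0
  show ?case by simp
next
  case (Suc n)
  have "{\<omega> \<in> space choices. walk root \<omega> (Suc n) = a} =
      (\<Union>b\<in>T. {\<omega> \<in> space choices. walk root \<omega> n = b} \<inter> ((\<lambda>\<omega>. \<omega> b) -` ({a} \<inter> succ b) \<inter> space choices))"
    using walk_succ by auto
  also have "\<dots> \<in> sets choices"
  proof (intro sets.countable_UN'' countable_nodes)
    fix b assume "b \<in> T"
    then have "(\<lambda>\<omega>. \<omega> b) \<in> measurable choices (step b)"
      unfolding choices_def by (rule measurable_component_singleton)
    then have "(\<lambda>\<omega>. \<omega> b) -` ({a} \<inter> succ b) \<inter> space choices \<in> sets choices"
      by (rule measurable_sets) (simp add: sets_step)
    with Suc show "{\<omega> \<in> space choices. walk root \<omega> n = b} \<inter>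
        ((\<lambda>\<omega>. \<omega> b) -` ({a} \<inter> succ b) \<inter> space choices) \<in> sets choices"
      by (rule sets.Int)
  qed
  finally show ?case .
qed

lemma sets_walk_cylinder: "walk_cylinder xs \<in> sets choices"
  unfolding walk_cylinder_def
  using sets.sets_Collect_finite_All[of "{..<length xs}"] sets_walk_eq by simp

lemma walk_borel_measurable: "walk root \<in> borel_measurable choices"
proof (rule borel_measurableI)
  fix S :: "(nat \<Rightarrow> 'a) set" assume "open S"
  define K where "K = {xs \<in> lists T. walk_cylinder xs \<subseteq> walk root -` S}"
  have "walk root -` S \<inter> space choices \<subseteq> (\<Union>xs\<in>K. walk_cylinder xs)"
  proof
    fix \<omega> assume \<omega>: "\<omega> \<in> walk root -` S \<inter> space choices"
    then obtain N where N: "\<And>g. (\<And>k. k \<le> N \<Longrightarrow> g k = walk root \<omega> k) \<Longrightarrow> g \<in> S"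
      using open_fun_nat_prefix_neighbourhood[OF \<open>open S\<close>] by blast
    define xs where "xs = map (walk root \<omega>) [0..<Suc N]"
    have "walk_cylinder xs \<subseteq> walk root -` S"
      by (auto simp: walk_cylinder_def xs_def less_Suc_eq_le intro!: N simp del: upt_Suc)
    moreover have "xs \<in> lists T" "\<omega> \<in> walk_cylinder xs"
      using \<omega> walk_succ(1) by (auto simp: xs_def walk_cylinder_def simp del: upt_Suc)
    ultimately show "\<omega> \<in> (\<Union>xs\<in>K. walk_cylinder xs)" by (auto simp: K_def)
  qed
  then have "walk root -` S \<inter> space choices = (\<Union>xs\<in>K. walk_cylinder xs)"
    by (auto simp: K_def walk_cylinder_def)
  moreover have "countable K"
    by (rule countable_subset[OF _ countable_lists[OF countable_nodes]]) (auto simp: K_def)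
  ultimately show "walk root -` S \<inter> space choices \<in> sets choices"
    by (auto intro: sets.countable_UN'' sets_walk_cylinder)
qed

lemma path_in_nodes:
  assumes "q 0 = root" and "\<And>k. k < N \<Longrightarrow> q (Suc k) \<in> succ (q k)" and "k \<le> N"
  shows "q k \<in> T"
  using assms(3)
proof (induction k)
  case (Suc k)
  then show ?case using assms(2)[of k] succ_subset[of "q k"] by auto
qed (simp add: assms(1) root_in_nodes)

lemma walk_cylinder_path:
  assumes "q 0 = root"
  shows "walk_cylinder (map q [0..<Suc N]) = {\<omega> \<in> space choices. \<forall>k<N. \<omega> (q k) = q (Suc k)}"
proof -
  have "(\<forall>k\<le>N. walk root \<omega> k = q k) \<longleftrightarrow> (\<forall>k<N. \<omega> (q k) = q (Suc k))" for \<omega>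
  proof
    assume "\<forall>k<N. \<omega> (q k) = q (Suc k)"
    then show "\<forall>k\<le>N. walk root \<omega> k = q k"
      by (intro allI, induct_tac k) (auto simp: assms)
  qed (metis Suc_leI less_imp_le walk_Suc)
  then show ?thesis
    by (simp add: walk_cylinder_def less_Suc_eq_le nth_map_upt del: upt_Suc)
qed

lemma emeasure_walk_cylinder:
  assumes q0: "q 0 = root" and q_succ: "\<And>k. k < N \<Longrightarrow> q (Suc k) \<in> succ (q k)"
    and inj: "inj_on q {..<N}"
  shows "emeasure choices (walk_cylinder (map q [0..<Suc N])) = ennreal (\<Prod>k<N. p (q k) (q (Suc k)))"
proof -
  have q_nodes: "q k \<in> T" if "k \<le> N" for k
    using path_in_nodes[of q N k] that q0 q_succ by blast
  define A where "A j = {q (Suc (inv_into {..<N} q j))}" for j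
  have A_q: "A (q k) = {q (Suc k)}" if "k < N" for k
    using that inj by (simp add: A_def)
  have "walk_cylinder (map q [0..<Suc N]) = prod_emb T step (q ` {..<N}) (\<Pi>\<^sub>E j\<in>q ` {..<N}. A j)"
    unfolding walk_cylinder_path[of q, OF q0] prod_emb_def choices_def space_PiM
    by (auto simp: A_q Pi_iff)
  also have "emeasure choices \<dots> = (\<Prod>j\<in>q ` {..<N}. emeasure (step j) (A j))"
    unfolding choices_def
  proof (rule emeasure_PiM_emb)
    show "q ` {..<N} \<subseteq> T" using q_nodes by auto
    show "A j \<in> sets (step j)" if "j \<in> q ` {..<N}" for j
      using that q_succ by (auto simp: A_q sets_step)
  qed (auto intro: prob_space_step)
  also have "\<dots> = (\<Prod>k<N. ennreal (p (q k) (q (Suc k))))"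
    using q_succ q_nodes
    by (simp add: prod.reindex[OF inj] A_q step_def emeasure_point_measure_finite finite_succ)
  also have "\<dots> = ennreal (\<Prod>k<N. p (q k) (q (Suc k)))"
    by (rule prod_ennreal) (use q_succ q_nodes p_nonneg in auto)
  finally show ?thesis .
qed

end

text \<open>Where \<open>c x = 0\<close> the flow vanishes below \<open>x\<close>, and any distribution on \<open>succ x\<close> will do.\<close>

definition flow_weight :: "('a \<Rightarrow> real) \<Rightarrow> ('a \<Rightarrow> 'a set) \<Rightarrow> 'a \<Rightarrow> 'a \<Rightarrow> real" where
  "flow_weight c succ x y = (if 0 < c x then c y / c x else 1 / real (card (succ x)))"

locale nonneg_flow =
  fixes T :: "'a::topological_space set" and succ :: "'a \<Rightarrow> 'a set" and c :: "'a \<Rightarrow> real"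
    and root :: 'a
  assumes countable_nodes: "countable T"
    and root_in_nodes: "root \<in> T"
    and succ_subset: "x \<in> T \<Longrightarrow> succ x \<subseteq> T"
    and finite_succ: "x \<in> T \<Longrightarrow> finite (succ x)"
    and succ_nonempty: "x \<in> T \<Longrightarrow> succ x \<noteq> {}"
    and c_nonneg: "x \<in> T \<Longrightarrow> 0 \<le> c x"
    and c_conservation: "x \<in> T \<Longrightarrow> c x = (\<Sum>y\<in>succ x. c y)"
begin

lemma mult_flow_weight:
  assumes "x \<in> T" and "y \<in> succ x"
  shows "c x * flow_weight c succ x y = c y"
proof (cases "0 < c x")
  case False
  have "y \<in> T" using assms succ_subset by blast
  have "c y \<le> (\<Sum>y\<in>succ x. c y)"
    using assms succ_subset c_nonneg by (intro member_le_sum) (auto simp: finite_succ)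
  with False have "c y = 0"
    using assms(1) c_conservation c_nonneg[of x] c_nonneg[OF \<open>y \<in> T\<close>] by simp
  with False c_nonneg[OF assms(1)] show ?thesis by simp
qed (simp add: flow_weight_def)

sublocale successor_choice T succ "flow_weight c succ" root
proof
  fix x assume x: "x \<in> T"
  show "0 \<le> flow_weight c succ x y" if "y \<in> succ x" for y
    using that x c_nonneg succ_subset by (force simp: flow_weight_def)
  show "(\<Sum>y\<in>succ x. flow_weight c succ x y) = 1"
  proof (cases "0 < c x")
    case True
    then show ?thesis
      using c_conservation[OF x] by (simp add: flow_weight_def flip: sum_divide_distrib)
  next
    case False
    then show ?thesis using x finite_succ succ_nonempty by (simp add: flow_weight_def)
  qed
qed (use countable_nodes root_in_nodes succ_subset finite_succ in auto)

lemma emeasure_walk_cylinder_flow: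
  assumes q0: "q 0 = root" and q_succ: "\<And>k. k < N \<Longrightarrow> q (Suc k) \<in> succ (q k)"
    and inj: "inj_on q {..<N}"
  shows "ennreal (c root) * emeasure choices (walk_cylinder (map q [0..<Suc N])) = ennreal (c (q N))"
proof -
  have telescope: "c root * (\<Prod>k<n. flow_weight c succ (q k) (q (Suc k))) = c (q n)" if "n \<le> N" for n
    using that
  proof (induction n)
    case (Suc n)
    then have "q n \<in> T" using path_in_nodes[of q N n] q0 q_succ by simp
    with Suc show ?case
      by (simp add: mult.assoc[symmetric] mult_flow_weight q_succ)
  qed (simp add: q0)
  have "0 \<le> (\<Prod>k<N. flow_weight c succ (q k) (q (Suc k)))"
    using path_in_nodes[of q N] q0 q_succ by (intro prod_nonneg) (auto intro: p_nonneg)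
  then show ?thesis
    using telescope[of N] c_nonneg[OF root_in_nodes]
    by (simp add: emeasure_walk_cylinder[OF assms] ennreal_mult[symmetric] del: upt_Suc)
qed

end

locale regular_tree =
  fixes X :: "'a::t2_space set" and r :: "'a \<Rightarrow> 'a" and m0 :: "'a \<Rightarrow> complex" and x0 :: 'a
  assumes surj_r: "r ` X = X"
    and finite_preim: "x \<in> X \<Longrightarrow> finite (preim X r x)"
    and regular: "regular_point X r m0 x0"
begin

abbreviation "T \<equiv> tree X r x0"
abbreviation "W \<equiv> Wfun X r m0"
abbreviation "level_of \<equiv> level r x0"

lemma x0_in_X: "x0 \<in> X"
  using regular by (simp add: regular_point_def)

lemma preim_nonempty: assumes "x \<in> X" shows "preim X r x \<noteq> {}"
proof -
  obtain y where "y \<in> X" "r y = x" using surj_r assms by (metis imageE)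
  then show ?thesis by (auto simp: preim_def)
qed

lemma preim_n_0: "preim_n X r 0 x0 = {x0}"
  using x0_in_X by (auto simp: preim_n_def)

lemma mem_preim_n_Suc: "y \<in> preim_n X r (Suc n) x0 \<longleftrightarrow> y \<in> X \<and> r y \<in> preim_n X r n x0"
  using surj_r by (auto simp: preim_n_def funpow_Suc_right simp del: funpow.simps)

lemma finite_preim_n: "finite (preim_n X r n x0)"
proof (induction n)
  case (Suc n)
  have "preim_n X r (Suc n) x0 = (\<Union>x\<in>preim_n X r n x0. preim X r x)"
    using mem_preim_n_Suc by (auto simp: preim_def)
  then show ?case using Suc finite_preim by (auto simp: preim_n_def)
qed (simp add: preim_n_0)

lemma funpow_in_preim_n:
  assumes "x \<in> preim_n X r n x0" and "k \<le> n"
  shows "(r ^^ k) x \<in> preim_n X r (n - k) x0"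
proof -
  have "(r ^^ k) x \<in> X"
    using surj_r assms(1) by (induction k) (auto simp: preim_n_def)
  moreover have "(r ^^ (n - k)) ((r ^^ k) x) = x0"
    using assms by (simp add: preim_n_def flip: funpow_add comp_apply[of "r ^^ (n - k)"])
  ultimately show ?thesis by (simp add: preim_n_def)
qed

lemma funpow_x0_ne_x0: "0 < n \<Longrightarrow> (r ^^ n) x0 \<noteq> x0"
proof
  assume "0 < n" and cycle: "(r ^^ n) x0 = x0"
  then have "x0 \<in> preim_n X r n x0 \<inter> preim_n X r (n + n) x0"
    using x0_in_X by (simp add: preim_n_def funpow_add)
  with \<open>0 < n\<close> regular show False by (auto simp: regular_point_def)
qed

lemma level_eq: assumes "x \<in> preim_n X r n x0" shows "level_of x = n"
  unfolding level_def
proof (rule the_equality)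
  show "(r ^^ n) x = x0" using assms by (simp add: preim_n_def)
  fix m assume m: "(r ^^ m) x = x0"
  show "m = n"
  proof (rule ccontr)
    assume "m \<noteq> n"
    consider "m = 0" | "n = 0" | "0 < m" "0 < n" by blast
    then show False
    proof cases
      case 1
      then show False using funpow_x0_ne_x0[of n] \<open>m \<noteq> n\<close> assms m by (auto simp: preim_n_def)
    next
      case 2
      then show False using funpow_x0_ne_x0[of m] \<open>m \<noteq> n\<close> assms m by (auto simp: preim_n_def)
    next
      case 3
      then have "x \<in> preim_n X r m x0 \<inter> preim_n X r n x0" using assms m by (auto simp: preim_n_def)
      with 3 \<open>m \<noteq> n\<close> regular show False by (auto simp: regular_point_def)
    qed
  qed
qed

lemma tree_subset: "T \<subseteq> X"
  by (auto simp: tree_def preim_n_def)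

lemma tree_level: "x \<in> T \<Longrightarrow> x \<in> preim_n X r (level_of x) x0"
  using level_eq by (auto simp: tree_def)

lemma countable_tree: "countable T"
  unfolding tree_def by (rule countable_UN) (auto intro: countable_finite finite_preim_n)

lemma preim_subset_tree:
  assumes "x \<in> T" and "y \<in> preim X r x"
  shows "y \<in> T" and "level_of y = Suc (level_of x)"
proof -
  have "y \<in> preim_n X r (Suc (level_of x)) x0"
    using assms tree_level mem_preim_n_Suc by (auto simp: preim_def)
  then show "y \<in> T" "level_of y = Suc (level_of x)"
    by (auto simp: tree_def intro: level_eq)
qed

lemma Wfun_pos: assumes "x \<in> T" shows "0 < W x"
proof -
  obtain n where "x \<in> preim_n X r n x0" using assms by (auto simp: tree_def)
  with regular have "W x \<noteq> 0" by (auto simp: regular_point_def preim_n_def)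
  then show ?thesis by (simp add: Wfun_def)
qed

definition ancestor :: "'a \<Rightarrow> nat \<Rightarrow> 'a" where
  "ancestor x k = (r ^^ (level_of x - k)) x"

lemma ancestor_in_preim_n:
  assumes "x \<in> T" and "k \<le> level_of x"
  shows "ancestor x k \<in> preim_n X r k x0"
  using funpow_in_preim_n[OF tree_level[OF assms(1)], of "level_of x - k"] assms(2)
  by (simp add: ancestor_def)

lemma ancestor_0: "x \<in> T \<Longrightarrow> ancestor x 0 = x0"
  using ancestor_in_preim_n[of x 0] by (simp add: preim_n_def)

lemma ancestor_Suc:
  assumes "x \<in> T" and "k < level_of x"
  shows "ancestor x (Suc k) \<in> preim X r (ancestor x k)"
proof -
  have "level_of x - k = Suc (level_of x - Suc k)" using assms(2) by simp
  then have "r (ancestor x (Suc k)) = ancestor x k" by (simp add: ancestor_def)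
  moreover have "ancestor x (Suc k) \<in> X"
    using ancestor_in_preim_n[OF assms(1), of "Suc k"] assms(2) by (simp add: preim_n_def)
  ultimately show ?thesis by (simp add: preim_def)
qed

lemma inj_on_ancestor: "x \<in> T \<Longrightarrow> inj_on (ancestor x) {..<level_of x}"
  by (rule inj_onI) (metis ancestor_in_preim_n level_eq lessThan_iff less_imp_le)

definition path_weight :: "'a \<Rightarrow> real" where
  "path_weight x = (\<Prod>k<level_of x. W ((r ^^ k) x))"

lemma path_weight_pos: assumes "x \<in> T" shows "0 < path_weight x"
  unfolding path_weight_def
proof (rule prod_pos)
  fix k assume "k \<in> {..<level_of x}"
  then have "(r ^^ k) x \<in> T"
    using funpow_in_preim_n[OF tree_level[OF assms], of k] by (auto simp: tree_def)
  then show "0 < W ((r ^^ k) x)" by (rule Wfun_pos)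
qed

lemma path_weight_preim:
  assumes "x \<in> T" and "y \<in> preim X r x"
  shows "path_weight y = W y * path_weight x"
proof -
  have "r y = x" using assms(2) by (simp add: preim_def)
  have "path_weight y = (\<Prod>k<Suc (level_of x). W ((r ^^ k) y))"
    using preim_subset_tree[OF assms] by (simp add: path_weight_def)
  also have "\<dots> = W y * (\<Prod>k<level_of x. W ((r ^^ Suc k) y))"
    by (subst prod.lessThan_Suc_shift) (simp del: funpow.simps)
  also have "\<dots> = W y * path_weight x"
    using \<open>r y = x\<close> by (simp add: path_weight_def funpow_Suc_right del: funpow.simps)
  finally show ?thesis .
qed

end

locale harmonic_tree = regular_tree +
  fixes u :: "'a \<Rightarrow> real"
  assumes u_nonneg: "x \<in> T \<Longrightarrow> 0 \<le> u x"
    and harmonic: "p_harmonic X r m0 x0 u"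
begin

definition mass :: "'a \<Rightarrow> real" where
  "mass x = u x * path_weight x"

lemma mass_conservation:
  assumes "x \<in> T"
  shows "mass x = (\<Sum>y\<in>preim X r x. mass y)"
proof -
  have "mass x = path_weight x * (\<Sum>y\<in>preim X r x. W y * u y)"
    using harmonic assms by (simp add: p_harmonic_def mass_def mult.commute)
  also have "\<dots> = (\<Sum>y\<in>preim X r x. mass y)"
    unfolding sum_distrib_left by (intro sum.cong refl) (simp add: mass_def path_weight_preim[OF assms])
  finally show ?thesis .
qed

sublocale nonneg_flow T "preim X r" mass x0
proof
  show "x0 \<in> T" using preim_n_0 by (auto simp: tree_def)
  fix x assume x: "x \<in> T"
  with tree_subset have "x \<in> X" by blast
  then show "finite (preim X r x)" "preim X r x \<noteq> {}"
    by (simp_all add: finite_preim preim_nonempty)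
  show "preim X r x \<subseteq> T" using preim_subset_tree(1)[OF x] by blast
  show "0 \<le> mass x" using u_nonneg[OF x] path_weight_pos[OF x] by (simp add: mass_def)
  show "mass x = (\<Sum>y\<in>preim X r x. mass y)" by (rule mass_conservation[OF x])
qed (rule countable_tree)

lemma walk_in_Omega:
  assumes "\<omega> \<in> space choices"
  shows "walk x0 \<omega> \<in> Omega X r x0"
  using walk_succ[OF assms] tree_subset by (auto simp: Omega_def preim_def)

lemma sets_cyl: "cyl X r x0 xs \<in> sets (restrict_space borel (Omega X r x0))"
proof -
  have "closed (\<Inter>k<length xs. {z :: nat \<Rightarrow> 'a. z k = xs ! k})"
    by (intro closed_INT ballI closed_Collect_eq continuous_on_product_coordinates continuous_on_const)
  moreover have "cyl X r x0 xs = Omega X r x0 \<inter> (\<Inter>k<length xs. {z. z k = xs ! k})"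
    by (auto simp: cyl_def)
  ultimately show ?thesis by (auto simp: sets_restrict_space)
qed

definition path_measure :: "(nat \<Rightarrow> 'a) measure" where
  "path_measure = density (distr choices (restrict_space borel (Omega X r x0)) (walk x0)) (\<lambda>_. mass x0)"

lemma emeasure_path_measure_cyl:
  assumes "x \<in> T"
  shows "emeasure path_measure (cyl X r x0 (map (ancestor x) [0..<Suc (level_of x)])) = mass x"
proof -
  let ?xs = "map (ancestor x) [0..<Suc (level_of x)]"
  have walk_measurable: "walk x0 \<in> measurable choices (restrict_space borel (Omega X r x0))"
    using walk_borel_measurable walk_in_Omega by (auto intro: measurable_restrict_space2)
  have "walk x0 -` cyl X r x0 ?xs \<inter> space choices = walk_cylinder ?xs"
    using walk_in_Omega by (auto simp: cyl_def walk_cylinder_def)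
  then have "emeasure path_measure (cyl X r x0 ?xs) = mass x0 * emeasure choices (walk_cylinder ?xs)"
    by (simp add: path_measure_def emeasure_density_const sets_cyl emeasure_distr walk_measurable del: upt_Suc)
  also have "\<dots> = mass (ancestor x (level_of x))"
    using assms by (intro emeasure_walk_cylinder_flow ancestor_0 ancestor_Suc inj_on_ancestor)
  finally show ?thesis by (simp add: ancestor_def)
qed

end

theorem theorem4p5:
  fixes X :: "'a::metric_space set" and r :: "'a \<Rightarrow> 'a" and m0 :: "'a \<Rightarrow> complex"
    and x0 :: 'a and u :: "'a \<Rightarrow> real"
  assumes "standing X r m0"
    and "regular_point X r m0 x0"
    and "\<forall>x\<in>tree X r x0. u x \<ge> 0"
    and "p_harmonic X r m0 x0 u"
  shows "\<exists>\<nu> :: (nat \<Rightarrow> 'a) measure.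
           sets \<nu> = sets (restrict_space borel (Omega X r x0)) \<and>
           (\<forall>x\<in>tree X r x0.
              u x = (1 / (\<Prod>k<level r x0 x. Wfun X r m0 ((r ^^ k) x))) *
                    enn2real (emeasure \<nu> (cyl X r x0
                      (map (\<lambda>k. (r ^^ (level r x0 x - k)) x) [0..<Suc (level r x0 x)])))
              \<and> emeasure \<nu> (cyl X r x0
                      (map (\<lambda>k. (r ^^ (level r x0 x - k)) x) [0..<Suc (level r x0 x)])) < \<infinity>)"
proof -
  interpret harmonic_tree X r m0 x0 u
    using assms by unfold_locales (auto simp: standing_def)
  show ?thesis
  proof (intro exI conjI ballI)
    show "sets path_measure = sets (restrict_space borel (Omega X r x0))"
      by (simp add: path_measure_def)
    fix x assume x: "x \<in> tree X r x0"
    note cyl = emeasure_path_measure_cyl[OF x, unfolded ancestor_def]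
    show "emeasure path_measure (cyl X r x0 (map (\<lambda>k. (r ^^ (level r x0 x - k)) x)
        [0..<Suc (level r x0 x)])) < \<infinity>"
      using cyl by simp
    show "u x = (1 / (\<Prod>k<level r x0 x. Wfun X r m0 ((r ^^ k) x))) *
        enn2real (emeasure path_measure (cyl X r x0 (map (\<lambda>k. (r ^^ (level r x0 x - k)) x)
        [0..<Suc (level r x0 x)])))"
      using cyl u_nonneg[OF x] path_weight_pos[OF x]
      by (simp add: mass_def flip: path_weight_def)
  qed
qed

end
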